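(* Let $\epsilon>0$ and let $\Delta\ge 1$ be an integer. There exists a deterministic distributed algorithm (in the synchronous port-numbering model described in the context) which, on every instance of the stable marriage problem whose bicoloured graph has maximum degree at most $\Delta$, terminates after $T \le 4 + 2\Delta^2/\epsilon$ synchronous communication steps and outputs an $\epsilon$-stable matching.
   Context: An instance of the stable marriage problem is a simple undirected bipartite graph $\mathcal{G}=(R\cup B,E)$ (a "bicoloured graph": nodes in $R$ are red, nodes in $B$ are blue, every edge joins a red and a blue node), possibly disconnected but without isolated nodes, in which each node $v$ has a linear order (its preference) on its neighbours; non-adjacent nodes are unacceptable to each other. $\Delta$ denotes the maximum degree. A matching is a set $M\subseteq E$ with every node incident to at most one edge of $M$. An edge $\{u,v\}\in E\setminus M$ is unstable relative to $M$ if (i) $u$ is unmatched or prefers $v$ to its partner in $M$, and (ii) $v$ is unmatched or prefers $u$ to its partner in $M$. $M$ is $\epsilon$-stable if the number of unstable edges is at most $\epsilon|M|$. Distributed model: $\mathcal{G}$ is the communication graph. Initially each node $v$ knows only its colour (red or blue), its degree $d(v)$, and the running time $T$; $v$ has $d(v)$ ports to its neighbours, numbered according to $v$'s preference order. There are no node identifiers. Computation is synchronous: in each time step every node receives messages from its neighbours, performs deterministic local computation, and sends a message to each neighbour. After $T$ steps each node outputs which neighbour (if any) is its partner, and outputs must be consistent (if $u$ names $v$, then $v$ names $u$), so the outputs define a matching. *)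

theory Defs
  imports Complex_Main
begin

text \<open>An instance: a finite node set V, a colouring red (True = red, False = blue),
and for each node v its neighbours listed in preference order pref v
(most preferred first). Port i of v leads to the neighbour pref v ! i.\<close>

definition sm_instance :: "'v set \<Rightarrow> ('v \<Rightarrow> bool) \<Rightarrow> ('v \<Rightarrow> 'v list) \<Rightarrow> bool" where
  "sm_instance V red pref \<longleftrightarrow> finite V \<and>
     (\<forall>v\<in>V. distinct (pref v) \<and> pref v \<noteq> [] \<and> set (pref v) \<subseteq> V \<and>
        (\<forall>u\<in>set (pref v). red u \<noteq> red v \<and> v \<in> set (pref u)))"

definition max_degree_le :: "'v set \<Rightarrow> ('v \<Rightarrow> 'v list) \<Rightarrow> nat \<Rightarrow> bool" where
  "max_degree_le V pref D \<longleftrightarrow> (\<forall>v\<in>V. length (pref v) \<le> D)"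

definition sm_edges :: "'v set \<Rightarrow> ('v \<Rightarrow> 'v list) \<Rightarrow> 'v set set" where
  "sm_edges V pref = {{u, v} | u v. u \<in> V \<and> v \<in> set (pref u)}"

text \<open>Position of w in v's preference list (0 = most preferred); also the port number.\<close>
definition port :: "('v \<Rightarrow> 'v list) \<Rightarrow> 'v \<Rightarrow> 'v \<Rightarrow> nat" where
  "port pref v w = (LEAST i. i < length (pref v) \<and> pref v ! i = w)"

definition prefers :: "('v \<Rightarrow> 'v list) \<Rightarrow> 'v \<Rightarrow> 'v \<Rightarrow> 'v \<Rightarrow> bool" where
  "prefers pref v a b \<longleftrightarrow> port pref v a < port pref v b"

definition is_matching :: "'v set \<Rightarrow> ('v \<Rightarrow> 'v list) \<Rightarrow> 'v set set \<Rightarrow> bool" where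
  "is_matching V pref M \<longleftrightarrow> M \<subseteq> sm_edges V pref \<and>
     (\<forall>e\<in>M. \<forall>e'\<in>M. e \<noteq> e' \<longrightarrow> e \<inter> e' = {})"

definition unmatched_or_prefers :: "('v \<Rightarrow> 'v list) \<Rightarrow> 'v set set \<Rightarrow> 'v \<Rightarrow> 'v \<Rightarrow> bool" where
  "unmatched_or_prefers pref M u v \<longleftrightarrow>
     (\<forall>w. {u, w} \<in> M \<longrightarrow> prefers pref u v w)"

definition unstable_edges :: "'v set \<Rightarrow> ('v \<Rightarrow> 'v list) \<Rightarrow> 'v set set \<Rightarrow> 'v set set" where
  "unstable_edges V pref M = {{u, v} | u v. {u, v} \<in> sm_edges V pref - M \<and>
      unmatched_or_prefers pref M u v \<and> unmatched_or_prefers pref M v u}"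

definition eps_stable :: "real \<Rightarrow> 'v set \<Rightarrow> ('v \<Rightarrow> 'v list) \<Rightarrow> 'v set set \<Rightarrow> bool" where
  "eps_stable eps V pref M \<longleftrightarrow> is_matching V pref M \<and>
     real (card (unstable_edges V pref M)) \<le> eps * real (card M)"

text \<open>A deterministic algorithm with states and messages encoded as natural numbers:
  init c d T : initial state from colour c, degree d and running time T;
  msg s i    : message sent on port i in state s;
  trans s ms : new state after receiving ms (ms ! i = message arriving on port i);
  out s      : output (Some i = partner is the neighbour on port i, None = unmatched).\<close>

record algorithm =
  init :: "bool \<Rightarrow> nat \<Rightarrow> nat \<Rightarrow> nat"
  msg :: "nat \<Rightarrow> nat \<Rightarrow> nat"
  trans :: "nat \<Rightarrow> nat list \<Rightarrow> nat"
  out :: "nat \<Rightarrow> nat option"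

fun run :: "algorithm \<Rightarrow> nat \<Rightarrow> ('v \<Rightarrow> bool) \<Rightarrow> ('v \<Rightarrow> 'v list) \<Rightarrow> nat \<Rightarrow> 'v \<Rightarrow> nat" where
  "run A T red pref 0 v = init A (red v) (length (pref v)) T"
| "run A T red pref (Suc t) v =
     trans A (run A T red pref t v)
       (map (\<lambda>u. msg A (run A T red pref t u) (port pref u v)) (pref v))"

definition node_output :: "algorithm \<Rightarrow> nat \<Rightarrow> ('v \<Rightarrow> bool) \<Rightarrow> ('v \<Rightarrow> 'v list) \<Rightarrow> 'v \<Rightarrow> nat option" where
  "node_output A T red pref v = out A (run A T red pref T v)"

definition consistent_output :: "algorithm \<Rightarrow> nat \<Rightarrow> 'v set \<Rightarrow> ('v \<Rightarrow> bool) \<Rightarrow> ('v \<Rightarrow> 'v list) \<Rightarrow> bool" where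
  "consistent_output A T V red pref \<longleftrightarrow>
     (\<forall>v\<in>V. \<forall>i. node_output A T red pref v = Some i \<longrightarrow>
        i < length (pref v) \<and>
        node_output A T red pref (pref v ! i) = Some (port pref (pref v ! i) v))"

definition output_matching :: "algorithm \<Rightarrow> nat \<Rightarrow> 'v set \<Rightarrow> ('v \<Rightarrow> bool) \<Rightarrow> ('v \<Rightarrow> 'v list) \<Rightarrow> 'v set set" where
  "output_matching A T V red pref =
     {{v, pref v ! i} | v i. v \<in> V \<and> node_output A T red pref v = Some i}"

end

theory Submission
  imports Defs "HOL-Library.Countable"
begin

text \<open>
  The algorithm is the Gale--Shapley proposal algorithm run for K rounds of two communication
  steps each: red nodes propose along their current pointer, every blue node holds its best current
  proposer, and rejected red nodes advance their pointer; the held proposals form the output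
  matching. A held proposer keeps proposing, so a blue node's held partner only improves, and every
  port a red node has advanced past leads to a blue node holding someone better. Hence an unstable
  edge has a red endpoint that is rejected in the last round, so there are at most D r unstable
  edges, where r is the number of red nodes rejected in the last round. The number of rejected red
  nodes never increases, and every rejection moves a pointer past an edge of a blue node that holds
  a proposal, so K r is at most the sum of all pointers, which is at most D times the size of the
  matching. Thus the number of unstable edges is at most D^2/K times the size of the matching, and
  K = ceiling (D^2/eps) rounds suffice.
\<close>

lemma port_nth:
  assumes "distinct (pref v)" "i < length (pref v)"
  shows "port pref v (pref v ! i) = i"
  unfolding port_def
  by (rule Least_equality) (use assms in \<open>auto simp: nth_eq_iff_index_eq\<close>)

lemma port_in_set:
  assumes "distinct (pref v)" "w \<in> set (pref v)"
  shows "port pref v w < length (pref v) \<and> pref v ! port pref v w = w"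
proof -
  obtain i where "i < length (pref v)" "pref v ! i = w"
    using assms(2) by (auto simp: in_set_conv_nth)
  thus ?thesis using port_nth[of pref v, OF assms(1)] by auto
qed

subsection \<open>Rounds of the Gale--Shapley algorithm\<close>

text \<open>A pointer function p gives, for each red node u, the index in u's list of the blue node
  it currently proposes to; p u = length (pref u) means that u has exhausted its list.\<close>

definition proposes :: "('v \<Rightarrow> 'v list) \<Rightarrow> ('v \<Rightarrow> nat) \<Rightarrow> 'v \<Rightarrow> 'v \<Rightarrow> bool" where
  "proposes pref p u w \<longleftrightarrow> p u < length (pref u) \<and> pref u ! p u = w"

definition held :: "('v \<Rightarrow> 'v list) \<Rightarrow> ('v \<Rightarrow> nat) \<Rightarrow> 'v \<Rightarrow> nat option" where
  "held pref p w = (if \<exists>i<length (pref w). proposes pref p (pref w ! i) w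
     then Some (LEAST i. i < length (pref w) \<and> proposes pref p (pref w ! i) w) else None)"

definition accepted :: "('v \<Rightarrow> 'v list) \<Rightarrow> ('v \<Rightarrow> nat) \<Rightarrow> 'v \<Rightarrow> bool" where
  "accepted pref p u \<longleftrightarrow> p u < length (pref u) \<and>
     held pref p (pref u ! p u) = Some (port pref (pref u ! p u) u)"

definition gs_step :: "('v \<Rightarrow> bool) \<Rightarrow> ('v \<Rightarrow> 'v list) \<Rightarrow> ('v \<Rightarrow> nat) \<Rightarrow> 'v \<Rightarrow> nat" where
  "gs_step red pref p u =
     (if red u \<and> p u < length (pref u) \<and> \<not> accepted pref p u then Suc (p u) else p u)"

definition gs_ptr :: "('v \<Rightarrow> bool) \<Rightarrow> ('v \<Rightarrow> 'v list) \<Rightarrow> nat \<Rightarrow> 'v \<Rightarrow> nat" where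
  "gs_ptr red pref k = (gs_step red pref ^^ k) (\<lambda>_. 0)"

lemma gs_ptr_0 [simp]: "gs_ptr red pref 0 u = 0"
  by (simp add: gs_ptr_def)

lemma gs_ptr_Suc: "gs_ptr red pref (Suc k) u = gs_step red pref (gs_ptr red pref k) u"
  by (simp add: gs_ptr_def)

lemma held_SomeD:
  assumes "held pref p w = Some i"
  shows "i < length (pref w) \<and> proposes pref p (pref w ! i) w"
proof -
  have ex: "\<exists>i. i < length (pref w) \<and> proposes pref p (pref w ! i) w"
    using assms by (auto simp: held_def split: if_splits)
  show ?thesis
    using LeastI_ex[OF ex] assms ex by (simp add: held_def)
qed

lemma held_le:
  assumes "j < length (pref w)" "proposes pref p (pref w ! j) w"
  shows "\<exists>i. held pref p w = Some i \<and> i \<le> j"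
  using assms by (auto simp: held_def intro: Least_le)

locale stable_marriage =
  fixes V :: "'v set" and red :: "'v \<Rightarrow> bool" and pref :: "'v \<Rightarrow> 'v list"
  assumes sm_instance: "sm_instance V red pref"
begin

lemma finite_V: "finite V"
  using sm_instance by (simp add: sm_instance_def)

lemma distinct_pref: "v \<in> V \<Longrightarrow> distinct (pref v)"
  using sm_instance by (simp add: sm_instance_def)

lemma neighbour:
  "v \<in> V \<Longrightarrow> u \<in> set (pref v) \<Longrightarrow> u \<in> V \<and> red u \<noteq> red v \<and> v \<in> set (pref u)"
  using sm_instance unfolding sm_instance_def by blast

abbreviation ptr :: "nat \<Rightarrow> 'v \<Rightarrow> nat" where
  "ptr k \<equiv> gs_ptr red pref k"

lemma ptr_le_length: "ptr k u \<le> length (pref u)"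
  by (induction k) (auto simp: gs_ptr_Suc gs_step_def)

lemma ptr_le_Suc: "ptr k u \<le> ptr (Suc k) u"
  by (auto simp: gs_ptr_Suc gs_step_def)

lemma ptr_Suc_accepted: "accepted pref (ptr k) u \<Longrightarrow> ptr (Suc k) u = ptr k u"
  by (simp add: gs_ptr_Suc gs_step_def)

lemma held_accepted:
  assumes "w \<in> V" "held pref p w = Some i"
  shows "accepted pref p (pref w ! i) \<and> pref (pref w ! i) ! p (pref w ! i) = w"
proof -
  from held_SomeD[OF assms(2)]
  have i: "i < length (pref w)" and "proposes pref p (pref w ! i) w" by auto
  moreover have "port pref w (pref w ! i) = i"
    using port_nth[of pref w, OF distinct_pref[OF assms(1)] i] .
  ultimately show ?thesis using assms(2) by (auto simp: accepted_def proposes_def)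
qed

lemma held_Suc:
  assumes "w \<in> V" "held pref (ptr k) w = Some i"
  shows "\<exists>i'. held pref (ptr (Suc k)) w = Some i' \<and> i' \<le> i"
proof -
  let ?u = "pref w ! i"
  from held_SomeD[OF assms(2)]
  have i: "i < length (pref w)" and "proposes pref (ptr k) ?u w" by auto
  moreover have "ptr (Suc k) ?u = ptr k ?u"
    using held_accepted[OF assms] ptr_Suc_accepted by blast
  ultimately have "proposes pref (ptr (Suc k)) ?u w" by (simp add: proposes_def)
  thus ?thesis using held_le[of _ pref w, OF i] by blast
qed

text \<open>The invariant of the algorithm: a red node has only passed blue nodes that hold a proposer
  they prefer to it.\<close>

lemma passed_held_better:
  assumes "m \<in> V" "red m" "j < ptr k m"
  shows "\<exists>i. held pref (ptr k) (pref m ! j) = Some i \<and> i < port pref (pref m ! j) m"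
  using assms(3)
proof (induction k)
  case 0 thus ?case by simp
next
  case (Suc k)
  let ?w = "pref m ! j"
  have "j < length (pref m)" using Suc.prems ptr_le_length[of "Suc k" m] by simp
  with neighbour[OF assms(1)] have wV: "?w \<in> V" and mw: "m \<in> set (pref ?w)" by auto
  have "\<exists>i. held pref (ptr k) ?w = Some i \<and> i < port pref ?w m"
  proof (cases "j < ptr k m")
    case True
    thus ?thesis by (rule Suc.IH)
  next
    case False
    with Suc.prems have j: "j = ptr k m"
      and rejected: "ptr k m < length (pref m) \<and> \<not> accepted pref (ptr k) m"
      by (auto simp: gs_ptr_Suc gs_step_def split: if_splits)
    have pin: "port pref ?w m < length (pref ?w)" "pref ?w ! port pref ?w m = m"
      using port_in_set[of pref ?w, OF distinct_pref[OF wV] mw] by auto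
    have "proposes pref (ptr k) (pref ?w ! port pref ?w m) ?w"
      using pin j rejected by (simp add: proposes_def)
    then obtain i where "held pref (ptr k) ?w = Some i" "i \<le> port pref ?w m"
      using held_le[of _ pref ?w, OF pin(1)] by blast
    moreover have "i \<noteq> port pref ?w m"
      using calculation(1) rejected j by (auto simp: accepted_def)
    ultimately show ?thesis by auto
  qed
  with held_Suc[OF wV] show ?case by (meson le_less_trans)
qed

definition Reds :: "'v set" where
  "Reds = {m \<in> V. red m}"

definition Accepted :: "nat \<Rightarrow> 'v set" where
  "Accepted k = {m \<in> V. red m \<and> accepted pref (ptr k) m}"

definition Active :: "nat \<Rightarrow> 'v set" where
  "Active k = {m \<in> V. red m \<and> ptr k m < length (pref m)}"

definition Rejected :: "nat \<Rightarrow> 'v set" where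
  "Rejected k = {m \<in> V. red m \<and> ptr k m < length (pref m) \<and> \<not> accepted pref (ptr k) m}"

definition Holding :: "nat \<Rightarrow> 'v set" where
  "Holding k = {w \<in> V. \<not> red w \<and> held pref (ptr k) w \<noteq> None}"

definition target :: "nat \<Rightarrow> 'v \<Rightarrow> 'v" where
  "target k m = pref m ! ptr k m"

definition gs_matching :: "nat \<Rightarrow> 'v set set" where
  "gs_matching k = (\<lambda>m. {m, target k m}) ` Accepted k"

lemma finite_node_sets [simp]:
  "finite Reds" "finite (Accepted k)" "finite (Active k)" "finite (Rejected k)" "finite (Holding k)"
  using finite_V by (auto simp: Reds_def Accepted_def Active_def Rejected_def Holding_def)

lemma Accepted_target:
  assumes "m \<in> Accepted k"
  shows "ptr k m < length (pref m) \<and> target k m \<in> set (pref m) \<and> target k m \<in> V \<and>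
    \<not> red (target k m) \<and> m \<in> set (pref (target k m)) \<and>
    held pref (ptr k) (target k m) = Some (port pref (target k m) m)"
proof -
  from assms have "m \<in> V" "red m" and acc: "accepted pref (ptr k) m"
    by (auto simp: Accepted_def)
  moreover from acc have "ptr k m < length (pref m)" by (simp add: accepted_def)
  ultimately show ?thesis
    using neighbour[of m "target k m"] by (auto simp: accepted_def target_def)
qed

lemma held_Accepted:
  assumes "w \<in> V" "\<not> red w" "held pref (ptr k) w = Some i"
  shows "pref w ! i \<in> Accepted k \<and> target k (pref w ! i) = w"
proof -
  from held_SomeD[OF assms(3)] have "pref w ! i \<in> set (pref w)" by auto
  with neighbour[OF assms(1)] assms(2) have "pref w ! i \<in> V" "red (pref w ! i)" by auto
  with held_accepted[OF assms(1,3)] show ?thesis by (simp add: Accepted_def target_def)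
qed

lemma inj_on_target: "inj_on (target k) (Accepted k)"
proof (rule inj_onI)
  fix a b assume a: "a \<in> Accepted k" and b: "b \<in> Accepted k" and eq: "target k a = target k b"
  let ?w = "target k a"
  from Accepted_target[OF a] have wV: "?w \<in> V" and aw: "a \<in> set (pref ?w)"
    and "held pref (ptr k) ?w = Some (port pref ?w a)" by auto
  moreover from Accepted_target[OF b] eq have bw: "b \<in> set (pref ?w)"
    and "held pref (ptr k) ?w = Some (port pref ?w b)" by auto
  ultimately have "port pref ?w a = port pref ?w b" by simp
  thus "a = b"
    using port_in_set[of pref ?w, OF distinct_pref[OF wV] aw]
      port_in_set[of pref ?w, OF distinct_pref[OF wV] bw] by metis
qed

lemma target_image: "target k ` Accepted k = Holding k"
proof
  show "target k ` Accepted k \<subseteq> Holding k"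
    using Accepted_target by (fastforce simp: Holding_def)
  show "Holding k \<subseteq> target k ` Accepted k"
  proof
    fix w assume "w \<in> Holding k"
    then obtain i where "w \<in> V" "\<not> red w" "held pref (ptr k) w = Some i"
      by (auto simp: Holding_def)
    from held_Accepted[OF this] show "w \<in> target k ` Accepted k" by force
  qed
qed

lemma card_Accepted_eq_card_Holding: "card (Accepted k) = card (Holding k)"
  using card_image[OF inj_on_target] target_image by metis

lemma card_Rejected_Suc_le: "card (Rejected (Suc k)) \<le> card (Rejected k)"
proof -
  have "Rejected j = Active j - Accepted j" and "Accepted j \<subseteq> Active j" for j
    by (auto simp: Rejected_def Active_def Accepted_def accepted_def)
  hence card_Rejected: "card (Rejected j) = card (Active j) - card (Holding j)" for j
    by (simp add: card_Diff_subset card_Accepted_eq_card_Holding)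
  have "Active (Suc k) \<subseteq> Active k"
    unfolding Active_def using ptr_le_Suc le_less_trans by blast
  moreover have "Holding k \<subseteq> Holding (Suc k)"
    using held_Suc by (fastforce simp: Holding_def)
  ultimately have "card (Active (Suc k)) \<le> card (Active k)" "card (Holding k) \<le> card (Holding (Suc k))"
    by (simp_all add: card_mono)
  thus ?thesis by (simp add: card_Rejected)
qed

lemma sum_ptr_eq_sum_card_Rejected: "(\<Sum>m\<in>Reds. ptr K m) = (\<Sum>k<K. card (Rejected k))"
proof (induction K)
  case (Suc K)
  have "ptr (Suc K) m = ptr K m + (if m \<in> Rejected K then 1 else 0)" if "m \<in> Reds" for m
    using that by (auto simp: gs_ptr_Suc gs_step_def Rejected_def Reds_def)
  hence "(\<Sum>m\<in>Reds. ptr (Suc K) m) = (\<Sum>m\<in>Reds. ptr K m) + card (Reds \<inter> Rejected K)"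
    by (simp add: sum.distrib sum.If_cases)
  moreover have "Reds \<inter> Rejected K = Rejected K" by (auto simp: Reds_def Rejected_def)
  ultimately show ?case using Suc.IH by simp
qed simp

text \<open>Every index that a red node has passed names an edge of a blue node that holds a proposal.\<close>

lemma sum_ptr_le_card_Holding:
  assumes "max_degree_le V pref D"
  shows "(\<Sum>m\<in>Reds. ptr K m) \<le> D * card (Holding K)"
proof -
  define S where "S = Sigma Reds (\<lambda>m. {..<ptr K m})"
  define g where "g = (\<lambda>(m, j). (pref m ! j, m))"
  have "inj_on g S"
  proof (rule inj_onI)
    fix x y assume "x \<in> S" "y \<in> S" "g x = g y"
    then obtain m j j' where "x = (m, j)" "y = (m, j')" "m \<in> V" "pref m ! j = pref m ! j'"
      "j < length (pref m)" "j' < length (pref m)"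
      using ptr_le_length[of K] by (auto simp: S_def Reds_def g_def less_le_trans)
    thus "x = y" using distinct_pref by (simp add: nth_eq_iff_index_eq)
  qed
  moreover have "g ` S \<subseteq> Sigma (Holding K) (\<lambda>w. set (pref w))"
  proof
    fix y assume "y \<in> g ` S"
    then obtain m j where m: "m \<in> V" "red m" "j < ptr K m" and y: "y = (pref m ! j, m)"
      by (auto simp: S_def Reds_def g_def)
    have "pref m ! j \<in> set (pref m)" using m(3) ptr_le_length[of K m] by simp
    with neighbour[OF m(1)] m(2) have "pref m ! j \<in> V" "\<not> red (pref m ! j)"
      "m \<in> set (pref (pref m ! j))" by auto
    with passed_held_better[OF m] show "y \<in> Sigma (Holding K) (\<lambda>w. set (pref w))"
      using y by (auto simp: Holding_def)
  qed
  ultimately have "card S \<le> card (Sigma (Holding K) (\<lambda>w. set (pref w)))"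
    by (metis card_image card_mono finite_SigmaI finite_node_sets(5) finite_set)
  also have "\<dots> = (\<Sum>w\<in>Holding K. card (set (pref w)))" by simp
  also have "\<dots> \<le> (\<Sum>w\<in>Holding K. D)"
    using assms card_length le_trans
    by (intro sum_mono) (fastforce simp: max_degree_le_def Holding_def)
  finally show ?thesis by (simp add: S_def mult.commute)
qed

lemma rounds_mult_card_Rejected_le:
  assumes "max_degree_le V pref D"
  shows "K * card (Rejected K) \<le> D * card (Accepted K)"
proof -
  have "card (Rejected K) \<le> card (Rejected k)" if "k \<le> K" for k
    using card_Rejected_Suc_le that
    by (metis (no_types, lifting) lift_Suc_antimono_le[of "\<lambda>k. card (Rejected k)"])
  hence "K * card (Rejected K) \<le> (\<Sum>k<K. card (Rejected k))"
    using sum_mono[of "{..<K}" "\<lambda>_. card (Rejected K)"] by simp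
  thus ?thesis
    using sum_ptr_eq_sum_card_Rejected[of K] sum_ptr_le_card_Holding[OF assms, of K]
      card_Accepted_eq_card_Holding
    by simp
qed

lemma gs_matching_memI: "m \<in> Accepted k \<Longrightarrow> {m, target k m} \<in> gs_matching k"
  by (auto simp: gs_matching_def)

lemma card_gs_matching: "card (gs_matching k) = card (Accepted k)"
proof -
  have "inj_on (\<lambda>m. {m, target k m}) (Accepted k)"
  proof (rule inj_onI)
    fix a b assume "a \<in> Accepted k" "b \<in> Accepted k" "{a, target k a} = {b, target k b}"
    with Accepted_target[of a k] Accepted_target[of b k] show "a = b"
      by (auto simp: Accepted_def doubleton_eq_iff)
  qed
  thus ?thesis by (simp add: gs_matching_def card_image)
qed

lemma is_matching_gs_matching: "is_matching V pref (gs_matching k)"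
  unfolding is_matching_def
proof
  show "gs_matching k \<subseteq> sm_edges V pref"
    using Accepted_target by (fastforce simp: gs_matching_def sm_edges_def Accepted_def)
  show "\<forall>e\<in>gs_matching k. \<forall>e'\<in>gs_matching k. e \<noteq> e' \<longrightarrow> e \<inter> e' = {}"
  proof (intro ballI impI)
    fix e e' assume "e \<in> gs_matching k" "e' \<in> gs_matching k" "e \<noteq> e'"
    then obtain a b where a: "a \<in> Accepted k" and b: "b \<in> Accepted k" and "a \<noteq> b"
      and "e = {a, target k a}" "e' = {b, target k b}"
      by (auto simp: gs_matching_def)
    moreover have "target k a \<noteq> target k b"
      using inj_on_target a b \<open>a \<noteq> b\<close> by (meson inj_on_def)
    ultimately show "e \<inter> e' = {}"
      using Accepted_target[OF a] Accepted_target[OF b] by (auto simp: Accepted_def)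
  qed
qed

lemma unstable_red_Rejected:
  assumes "m \<in> V" "red m" "w \<in> set (pref m)"
    and m_unstable: "unmatched_or_prefers pref (gs_matching K) m w"
    and w_unstable: "unmatched_or_prefers pref (gs_matching K) w m"
  shows "m \<in> Rejected K"
proof -
  from neighbour[OF assms(1,3)] assms(2) have wV: "w \<in> V" "\<not> red w" by auto
  have pw: "port pref m w < length (pref m)" "pref m ! port pref m w = w"
    using port_in_set[of pref m, OF distinct_pref[OF assms(1)] assms(3)] by auto
  show ?thesis
  proof (cases "port pref m w < ptr K m")
    case True
    from passed_held_better[OF assms(1,2) True] pw obtain i
      where held: "held pref (ptr K) w = Some i" and better: "i < port pref w m" by auto
    from held_Accepted[OF wV held] have "{w, pref w ! i} \<in> gs_matching K"
      using gs_matching_memI[of "pref w ! i" K] by (simp add: insert_commute)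
    with w_unstable have "prefers pref w m (pref w ! i)"
      by (simp add: unmatched_or_prefers_def)
    moreover have "port pref w (pref w ! i) = i"
      using held_SomeD[OF held] port_nth[of pref w, OF distinct_pref[OF wV(1)]] by simp
    ultimately show ?thesis using better by (simp add: prefers_def)
  next
    case False
    have "\<not> accepted pref (ptr K) m"
    proof
      assume "accepted pref (ptr K) m"
      hence mA: "m \<in> Accepted K" using assms(1,2) by (simp add: Accepted_def)
      with m_unstable gs_matching_memI have "prefers pref m w (target K m)"
        by (simp add: unmatched_or_prefers_def)
      moreover have "port pref m (target K m) = ptr K m"
        using Accepted_target[OF mA] port_nth[of pref m, OF distinct_pref[OF assms(1)]]
        by (simp add: target_def)
      ultimately show False using False by (simp add: prefers_def)
    qed
    with False pw(1) assms(1,2) show ?thesis by (simp add: Rejected_def)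
  qed
qed

lemma unstable_edges_subset:
  "unstable_edges V pref (gs_matching K) \<subseteq> (\<Union>m\<in>Rejected K. (\<lambda>w. {m, w}) ` set (pref m))"
proof
  fix e assume "e \<in> unstable_edges V pref (gs_matching K)"
  then obtain a b where e: "e = {a, b}" and "a \<in> V" "b \<in> set (pref a)"
    and unstable: "unmatched_or_prefers pref (gs_matching K) a b"
      "unmatched_or_prefers pref (gs_matching K) b a"
    by (auto simp: unstable_edges_def sm_edges_def doubleton_eq_iff)
  with neighbour[of a b] consider "red a" | "red b" "b \<in> V" "a \<in> set (pref b)" by auto
  thus "e \<in> (\<Union>m\<in>Rejected K. (\<lambda>w. {m, w}) ` set (pref m))"
  proof cases
    case 1
    with unstable_red_Rejected \<open>a \<in> V\<close> \<open>b \<in> set (pref a)\<close> unstable e show ?thesis by blast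
  next
    case 2
    with unstable_red_Rejected[of b a] unstable e show ?thesis by (blast intro: insert_commute)
  qed
qed

lemma card_unstable_edges_le:
  assumes "max_degree_le V pref D"
  shows "card (unstable_edges V pref (gs_matching K)) \<le> D * card (Rejected K)"
proof -
  have "card (unstable_edges V pref (gs_matching K))
      \<le> card (\<Union>m\<in>Rejected K. (\<lambda>w. {m, w}) ` set (pref m))"
    using unstable_edges_subset by (intro card_mono) auto
  also have "\<dots> \<le> (\<Sum>m\<in>Rejected K. card ((\<lambda>w. {m, w}) ` set (pref m)))"
    by (rule card_UN_le) simp
  also have "\<dots> \<le> (\<Sum>m\<in>Rejected K. D)"
  proof (rule sum_mono)
    fix m assume "m \<in> Rejected K"
    hence "length (pref m) \<le> D" using assms by (simp add: Rejected_def max_degree_le_def)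
    thus "card ((\<lambda>w. {m, w}) ` set (pref m)) \<le> D"
      using card_image_le[of "set (pref m)" "\<lambda>w. {m, w}"] card_length[of "pref m"] by simp
  qed
  finally show ?thesis by (simp add: mult.commute)
qed

end

subsection \<open>The distributed algorithm\<close>

text \<open>State r b p h a: the colour r, whether the next step is the second of a round (b), the
  pointer p of a red node, the held port h of a blue node, and whether the last proposal of a red
  node was accepted (a).\<close>

datatype node_state = State bool bool nat "nat option" bool

instance node_state :: countable
  by countable_datatype

definition first_one :: "nat list \<Rightarrow> nat option" where
  "first_one ms =
     (if \<exists>i<length ms. ms ! i = 1 then Some (LEAST i. i < length ms \<and> ms ! i = 1) else None)"

text \<open>A red node always signals on its pointer port and a blue node on its held port; receivers
  read the proposals in the first and the acceptances in the second step of a round.\<close>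

fun gs_msg :: "node_state \<Rightarrow> nat \<Rightarrow> nat" where
  "gs_msg (State r b p h a) i =
     (if r then (if i = p then 1 else 0) else (if h = Some i then 1 else 0))"

fun gs_trans :: "node_state \<Rightarrow> nat list \<Rightarrow> node_state" where
  "gs_trans (State True False p h a) ms = State True True p h a"
| "gs_trans (State False False p h a) ms = State False True p (first_one ms) a"
| "gs_trans (State True True p h a) ms =
     State True False (if p < length ms \<and> ms ! p \<noteq> 1 then Suc p else p) h
       (p < length ms \<and> ms ! p = 1)"
| "gs_trans (State False True p h a) ms = State False False p h a"

fun gs_out :: "node_state \<Rightarrow> nat option" where
  "gs_out (State r b p h a) = (if r then (if a then Some p else None) else h)"

definition gs_algorithm :: algorithm where
  "gs_algorithm = \<lparr> init = (\<lambda>c d T. to_nat (State c False 0 None False)),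
     msg = (\<lambda>s. gs_msg (from_nat s)),
     trans = (\<lambda>s ms. to_nat (gs_trans (from_nat s) ms)),
     out = (\<lambda>s. gs_out (from_nat s)) \<rparr>"

lemma gs_algorithm_simps [simp]:
  "init gs_algorithm c d T = to_nat (State c False 0 None False)"
  "msg gs_algorithm (to_nat s) = gs_msg s"
  "trans gs_algorithm (to_nat s) ms = to_nat (gs_trans s ms)"
  "out gs_algorithm (to_nat s) = gs_out s"
  by (simp_all add: gs_algorithm_def)

context stable_marriage
begin

text \<open>The states at time 2k and 2k+1 of the run, in terms of the pointers after k rounds.\<close>

definition state_even :: "nat \<Rightarrow> 'v \<Rightarrow> node_state" where
  "state_even k v = (if red v
     then State True False (ptr k v) None (case k of 0 \<Rightarrow> False | Suc j \<Rightarrow> accepted pref (ptr j) v)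
     else State False False 0 (case k of 0 \<Rightarrow> None | Suc j \<Rightarrow> held pref (ptr j) v) False)"

definition state_odd :: "nat \<Rightarrow> 'v \<Rightarrow> node_state" where
  "state_odd k v = (if red v
     then State True True (ptr k v) None (case k of 0 \<Rightarrow> False | Suc j \<Rightarrow> accepted pref (ptr j) v)
     else State False True 0 (held pref (ptr k) v) False)"

lemma run_Suc_eq:
  assumes "\<forall>u\<in>V. run gs_algorithm T red pref t u = to_nat (s u)" "v \<in> V"
  shows "run gs_algorithm T red pref (Suc t) v =
    to_nat (gs_trans (s v) (map (\<lambda>u. gs_msg (s u) (port pref u v)) (pref v)))"
proof -
  have "map (\<lambda>u. msg gs_algorithm (run gs_algorithm T red pref t u) (port pref u v)) (pref v) =
      map (\<lambda>u. gs_msg (s u) (port pref u v)) (pref v)"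
    using assms neighbour[OF assms(2)] by (intro map_cong) auto
  moreover have "run gs_algorithm T red pref (Suc t) v = to_nat (gs_trans (s v)
      (map (\<lambda>u. msg gs_algorithm (run gs_algorithm T red pref t u) (port pref u v)) (pref v)))"
    using assms by simp
  ultimately show ?thesis by (simp only:)
qed

lemma first_one_proposals:
  assumes "v \<in> V" "\<not> red v"
  shows "first_one (map (\<lambda>u. gs_msg (state_even k u) (port pref u v)) (pref v)) = held pref (ptr k) v"
proof -
  have "gs_msg (state_even k (pref v ! i)) (port pref (pref v ! i) v) = 1
      \<longleftrightarrow> proposes pref (ptr k) (pref v ! i) v" if "i < length (pref v)" for i
  proof -
    let ?u = "pref v ! i"
    from that neighbour[OF assms(1), of ?u] assms(2)
    have uV: "?u \<in> V" "red ?u" and vu: "v \<in> set (pref ?u)" by auto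
    have "port pref ?u v = ptr k ?u \<longleftrightarrow> proposes pref (ptr k) ?u v"
      using port_in_set[of pref ?u, OF distinct_pref[OF uV(1)] vu]
        port_nth[of pref ?u "ptr k ?u", OF distinct_pref[OF uV(1)]]
      by (auto simp: proposes_def)
    thus ?thesis using uV by (simp add: state_even_def)
  qed
  thus ?thesis by (simp add: first_one_def held_def cong: conj_cong)
qed

lemma run_odd:
  assumes "\<forall>u\<in>V. run gs_algorithm T red pref (2 * k) u = to_nat (state_even k u)" "v \<in> V"
  shows "run gs_algorithm T red pref (Suc (2 * k)) v = to_nat (state_odd k v)"
  using run_Suc_eq[OF assms] first_one_proposals[OF assms(2)]
  by (cases "red v") (auto simp: state_even_def state_odd_def)

lemma accept_message:
  assumes "v \<in> V" "red v" "ptr k v < length (pref v)"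
  shows "map (\<lambda>u. gs_msg (state_odd k u) (port pref u v)) (pref v) ! ptr k v = 1
    \<longleftrightarrow> accepted pref (ptr k) v"
proof -
  let ?w = "pref v ! ptr k v"
  from assms neighbour[OF assms(1), of ?w] have "\<not> red ?w" by auto
  with assms(3) show ?thesis by (simp add: state_odd_def accepted_def)
qed

lemma run_even:
  assumes "\<forall>u\<in>V. run gs_algorithm T red pref (Suc (2 * k)) u = to_nat (state_odd k u)" "v \<in> V"
  shows "run gs_algorithm T red pref (2 * Suc k) v = to_nat (state_even (Suc k) v)"
  using run_Suc_eq[OF assms] accept_message[OF assms(2)]
  by (cases "red v") (auto simp: state_even_def state_odd_def gs_ptr_Suc gs_step_def accepted_def)

lemma run_gs_algorithm:
  "v \<in> V \<Longrightarrow> run gs_algorithm T red pref (2 * k) v = to_nat (state_even k v)"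
proof (induction k arbitrary: v)
  case 0
  thus ?case by (simp add: state_even_def)
next
  case (Suc k)
  thus ?case using run_odd run_even by blast
qed

lemma gs_output:
  assumes "v \<in> V"
  shows "node_output gs_algorithm (2 * Suc K) red pref v =
    (if red v then (if accepted pref (ptr K) v then Some (ptr K v) else None) else held pref (ptr K) v)"
  unfolding node_output_def run_gs_algorithm[OF assms]
  using ptr_Suc_accepted[of K v] by (simp add: state_even_def)

lemma consistent_output_gs: "consistent_output gs_algorithm (2 * Suc K) V red pref"
  unfolding consistent_output_def
proof (intro ballI allI impI)
  fix v i assume vV: "v \<in> V" and out: "node_output gs_algorithm (2 * Suc K) red pref v = Some i"
  show "i < length (pref v) \<and>
    node_output gs_algorithm (2 * Suc K) red pref (pref v ! i) = Some (port pref (pref v ! i) v)"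
  proof (cases "red v")
    case True
    with out gs_output[OF vV] have "v \<in> Accepted K" "i = ptr K v"
      by (auto simp: Accepted_def vV split: if_splits)
    with Accepted_target[of v K] gs_output[of "target K v"] show ?thesis
      by (simp add: target_def)
  next
    case False
    with out gs_output[OF vV] have held: "held pref (ptr K) v = Some i" by simp
    let ?u = "pref v ! i"
    have u: "?u \<in> Accepted K" "target K ?u = v" using held_Accepted[OF vV False held] by auto
    hence "port pref ?u v = ptr K ?u"
      using Accepted_target[OF u(1)] port_nth[of pref ?u "ptr K ?u", OF distinct_pref]
      by (auto simp: target_def Accepted_def)
    with u gs_output[of ?u] held_SomeD[OF held] show ?thesis by (simp add: Accepted_def)
  qed
qed

lemma output_matching_gs: "output_matching gs_algorithm (2 * Suc K) V red pref = gs_matching K"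
proof (intro equalityI subsetI)
  fix e assume "e \<in> output_matching gs_algorithm (2 * Suc K) V red pref"
  then obtain v i where e: "e = {v, pref v ! i}" and vV: "v \<in> V"
    and out: "node_output gs_algorithm (2 * Suc K) red pref v = Some i"
    by (auto simp: output_matching_def)
  show "e \<in> gs_matching K"
  proof (cases "red v")
    case True
    with out gs_output[OF vV] have "v \<in> Accepted K" "e = {v, target K v}"
      using e by (auto simp: Accepted_def target_def vV split: if_splits)
    thus ?thesis using gs_matching_memI by simp
  next
    case False
    with out gs_output[OF vV] have "held pref (ptr K) v = Some i" by simp
    from held_Accepted[OF vV False this] gs_matching_memI[of "pref v ! i" K] e
    show ?thesis by (simp add: insert_commute)
  qed
next
  fix e assume "e \<in> gs_matching K"
  then obtain m where m: "m \<in> Accepted K" and e: "e = {m, target K m}"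
    by (auto simp: gs_matching_def)
  hence "m \<in> V" "node_output gs_algorithm (2 * Suc K) red pref m = Some (ptr K m)"
    using gs_output by (auto simp: Accepted_def)
  thus "e \<in> output_matching gs_algorithm (2 * Suc K) V red pref"
    using e unfolding output_matching_def target_def by blast
qed

lemma eps_stable_gs_output:
  assumes "max_degree_le V pref D" "real D ^ 2 \<le> eps * real K" "K > 0"
  shows "eps_stable eps V pref (output_matching gs_algorithm (2 * Suc K) V red pref)"
proof -
  let ?U = "real (card (unstable_edges V pref (gs_matching K)))"
  let ?R = "real (card (Rejected K))" and ?M = "real (card (gs_matching K))"
  have "real K * ?U \<le> real K * (real D * ?R)"
    using card_unstable_edges_le[OF assms(1), of K] by (simp flip: of_nat_mult)
  also have "\<dots> = real D * (real K * ?R)" by simp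
  also have "\<dots> \<le> real D * (real D * ?M)"
    using rounds_mult_card_Rejected_le[OF assms(1), of K] card_gs_matching[of K]
    by (intro mult_left_mono) (simp_all flip: of_nat_mult)
  also have "\<dots> = real D ^ 2 * ?M" by (simp add: power2_eq_square)
  also have "\<dots> \<le> real K * (eps * ?M)"
    using mult_right_mono[OF assms(2), of ?M] by (simp add: mult_ac)
  finally have "?U \<le> eps * ?M" using assms(3) by simp
  thus ?thesis
    unfolding eps_stable_def output_matching_gs using is_matching_gs_matching by simp
qed

end

theorem theorem1:
  fixes eps :: real and D :: nat
  assumes "eps > 0" and "D \<ge> 1"
  shows "\<exists>(A :: algorithm) (T :: nat). real T \<le> 4 + 2 * real D ^ 2 / eps \<and>
    (\<forall>(V :: nat set) red pref. sm_instance V red pref \<and> max_degree_le V pref D \<longrightarrow>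
       consistent_output A T V red pref \<and>
       eps_stable eps V pref (output_matching A T V red pref))"
proof -
  define K where "K = nat \<lceil>real D ^ 2 / eps\<rceil>"
  have "real D ^ 2 / eps > 0" using assms by simp
  hence K: "real D ^ 2 / eps \<le> real K" "real K \<le> real D ^ 2 / eps + 1" "K > 0"
    by (auto simp: K_def)
  hence "real D ^ 2 \<le> eps * real K" using assms(1) by (simp add: divide_le_eq mult.commute)
  moreover have "real (2 * Suc K) \<le> 4 + 2 * real D ^ 2 / eps" using K(2) by simp
  ultimately show ?thesis
    using K(3) stable_marriage.consistent_output_gs stable_marriage.eps_stable_gs_output
    by (metis stable_marriage.intro)
qed

end
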